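(* Let $X$ be a connected bipartite graph with a unique perfect matching. Then for any assignment of nonzero real weights to the edges of $X$, no vertex of the resulting weighted graph is sedentary.
   Context: For a weighted graph with weighted adjacency matrix $A$ (entries equal to edge weights, $0$ for non-adjacent pairs), the transition matrix is $U(t)=e^{itA}$. A vertex $u$ is sedentary if $\inf_{t>0}|U(t)_{u,u}|\ge C$ for some constant $0<C\le1$, and not sedentary if $\inf_{t>0}|U(t)_{u,u}|=0$. *)

theory Defs
  imports "HOL-Analysis.Analysis"
begin

definition simple_graph :: "('n \<Rightarrow> 'n \<Rightarrow> bool) \<Rightarrow> bool" where
  "simple_graph E \<longleftrightarrow> (\<forall>u v. E u v \<longrightarrow> E v u) \<and> (\<forall>u. \<not> E u u)"

definition graph_connected :: "('n \<Rightarrow> 'n \<Rightarrow> bool) \<Rightarrow> bool" where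
  "graph_connected E \<longleftrightarrow> (\<forall>u v. E\<^sup>*\<^sup>* u v)"

definition bipartite :: "('n \<Rightarrow> 'n \<Rightarrow> bool) \<Rightarrow> bool" where
  "bipartite E \<longleftrightarrow> (\<exists>S. \<forall>u v. E u v \<longrightarrow> (u \<in> S \<longleftrightarrow> v \<notin> S))"

definition perfect_matching :: "('n \<Rightarrow> 'n \<Rightarrow> bool) \<Rightarrow> 'n set set \<Rightarrow> bool" where
  "perfect_matching E M \<longleftrightarrow>
     (\<forall>e\<in>M. \<exists>u v. e = {u, v} \<and> E u v) \<and> (\<forall>v. \<exists>!e. e \<in> M \<and> v \<in> e)"

definition unique_perfect_matching :: "('n \<Rightarrow> 'n \<Rightarrow> bool) \<Rightarrow> bool" where
  "unique_perfect_matching E \<longleftrightarrow> (\<exists>!M. perfect_matching E M)"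

definition weighted_adj :: "('n::finite \<Rightarrow> 'n \<Rightarrow> bool) \<Rightarrow> ('n set \<Rightarrow> real) \<Rightarrow> real^'n^'n" where
  "weighted_adj E w = (\<chi> u v. if E u v then w {u, v} else 0)"

primrec mat_pow :: "'a::comm_ring_1^'n^'n \<Rightarrow> nat \<Rightarrow> 'a^'n^'n" where
  "mat_pow A 0 = mat 1"
| "mat_pow A (Suc k) = A ** mat_pow A k"

definition mat_exp :: "complex^'n^'n \<Rightarrow> complex^'n^'n" where
  "mat_exp A = (\<chi> i j. \<Sum>k. (mat_pow A k) $ i $ j / of_nat (fact k))"

definition transition :: "real^'n^'n \<Rightarrow> real \<Rightarrow> complex^'n^'n" where
  "transition A t = mat_exp (\<chi> i j. \<i> * of_real t * of_real (A $ i $ j))"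

definition sedentary :: "real^'n^'n \<Rightarrow> 'n \<Rightarrow> bool" where
  "sedentary A u \<longleftrightarrow>
     (\<exists>C. 0 < C \<and> C \<le> 1 \<and> (INF t\<in>{0<..}. cmod (transition A t $ u $ u)) \<ge> C)"

end

theory Submission
  imports Defs
begin

text \<open>
  If a bipartite graph has a unique perfect matching, its weighted adjacency matrix \<open>A\<close> is
  nonsingular: the perfect matching is the only permutation contributing to \<open>det A\<close>.
  Bipartiteness makes the odd powers of \<open>A\<close> vanish on the diagonal, so \<open>g(t) = U(t)\<^sub>u\<^sub>u\<close> is real,
  starts at \<open>1\<close> and is continuous. If \<open>u\<close> were sedentary with constant \<open>C\<close>, then \<open>g \<ge> C\<close> on
  \<open>[0,\<infinity>)\<close>, so the antiderivative \<open>Im (U(t) A\<^sup>-\<^sup>1)\<^sub>u\<^sub>u\<close> of \<open>g\<close> would grow at least like \<open>C t\<close>.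
  But it is bounded, since \<open>U(t)\<close> is unitary.
\<close>

section \<open>Unique perfect matchings and the determinant\<close>

lemma perfect_matching_edge:
  assumes "simple_graph E" and "perfect_matching E M" and "{u, v} \<in> M"
  shows "E u v"
proof -
  obtain a b where ab: "{u, v} = {a, b}" "E a b"
    using assms(2,3) unfolding perfect_matching_def by (meson conjunct1 bspec)
  moreover have "E b a" using ab(2) assms(1) unfolding simple_graph_def by blast
  ultimately show ?thesis by (auto simp: doubleton_eq_iff)
qed

lemma perfect_matching_partner_unique:
  assumes "simple_graph E" and "perfect_matching E M" and "{u, v} \<in> M" and "{u, v'} \<in> M"
  shows "v = v'"
proof -
  have "\<exists>!e. e \<in> M \<and> u \<in> e"
    using assms(2) by (simp add: perfect_matching_def)
  then have "{u, v} = {u, v'}"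
    using assms(3,4) by (metis insertI1)
  moreover have "E u v" "E u v'"
    using perfect_matching_edge[OF assms(1,2)] assms(3,4) by blast+
  then have "v \<noteq> u" "v' \<noteq> u"
    using assms(1) unfolding simple_graph_def by auto
  ultimately show ?thesis by (auto simp: doubleton_eq_iff)
qed

lemma perfect_matching_permutation:
  assumes "simple_graph E" and "perfect_matching E M"
  obtains p where "p permutes UNIV" and "\<And>u. {u, p u} \<in> M"
proof -
  have "\<exists>v. {u, v} \<in> M" for u
  proof -
    have "\<exists>!e. e \<in> M \<and> u \<in> e"
      using assms(2) by (simp add: perfect_matching_def)
    then obtain e where e: "e \<in> M" "u \<in> e" by blast
    then obtain a b where "e = {a, b}"
      using assms(2) unfolding perfect_matching_def by (meson conjunct1 bspec)
    with e show ?thesis by (auto simp: insert_commute)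
  qed
  then obtain p where p: "\<And>u. {u, p u} \<in> M" by metis
  have "p (p u) = u" for u
    using perfect_matching_partner_unique[OF assms p[of "p u"]] p[of u]
    by (simp add: insert_commute)
  then have "p permutes UNIV"
    by (intro bij_imp_permutes involuntory_imp_bij) auto
  with p show ?thesis using that by blast
qed

lemma perfect_matching_of_permutation:
  assumes bip: "\<forall>u v. E u v \<longrightarrow> (u \<in> S \<longleftrightarrow> v \<notin> S)"
    and p: "p permutes UNIV" and edges: "\<forall>i. E i (p i)"
  shows "perfect_matching E {{i, p i} | i. i \<in> S}"
  unfolding perfect_matching_def
proof (intro conjI allI)
  show "\<forall>e\<in>{{i, p i} |i. i \<in> S}. \<exists>u v. e = {u, v} \<and> E u v"
    using edges by blast
next
  fix v
  have not_in_S: "p i \<notin> S" if "i \<in> S" for i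
    using that bip edges by blast
  obtain i where i: "i \<in> S" "v = i \<or> v = p i"
  proof (cases "v \<in> S")
    case False
    obtain i where "p i = v" using permutes_surj[OF p] by (metis surjD)
    moreover from this have "i \<in> S" using False bip edges by blast
    ultimately show ?thesis using that by blast
  qed blast
  have unique: "j = i" if "j \<in> S" "v = j \<or> v = p j" for j
    using that i not_in_S permutes_inj[OF p] by (auto dest: injD)
  show "\<exists>!e. e \<in> {{i, p i} | i. i \<in> S} \<and> v \<in> e"
  proof (rule ex1I[of _ "{i, p i}"])
    show "{i, p i} \<in> {{i, p i} | i. i \<in> S} \<and> v \<in> {i, p i}" using i by blast
  next
    fix e assume "e \<in> {{i, p i} | i. i \<in> S} \<and> v \<in> e"
    then obtain j where "j \<in> S" "e = {j, p j}" "v = j \<or> v = p j" by blast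
    then show "e = {i, p i}" using unique by blast
  qed
qed

text \<open>
  A permutation along the edges of a bipartite graph yields two perfect matchings, read off
  from either side of the bipartition; uniqueness forces both to be the unique one.
\<close>
lemma unique_perfect_matching_ex1_edge_permutation:
  assumes sg: "simple_graph E" and "bipartite E" and "unique_perfect_matching E"
  shows "\<exists>!p. p permutes UNIV \<and> (\<forall>i. E i (p i))"
proof -
  obtain M where pm: "perfect_matching E M" and unique: "\<And>M'. perfect_matching E M' \<Longrightarrow> M' = M"
    using assms(3) unfolding unique_perfect_matching_def by blast
  obtain S where S: "\<forall>u v. E u v \<longrightarrow> (u \<in> S \<longleftrightarrow> v \<notin> S)"
    using assms(2) unfolding bipartite_def by blast
  then have S': "\<forall>u v. E u v \<longrightarrow> (u \<in> - S \<longleftrightarrow> v \<notin> - S)" by auto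
  obtain q where q: "q permutes UNIV" "\<And>u. {u, q u} \<in> M"
    using perfect_matching_permutation[OF sg pm] by blast
  show ?thesis
  proof (rule ex1I[of _ q])
    show "q permutes UNIV \<and> (\<forall>i. E i (q i))"
      using q perfect_matching_edge[OF sg pm] by blast
  next
    fix p assume p: "p permutes UNIV \<and> (\<forall>i. E i (p i))"
    have "{{i, p i} | i. i \<in> S} = M" "{{i, p i} | i. i \<in> - S} = M"
      using unique perfect_matching_of_permutation[OF S] perfect_matching_of_permutation[OF S'] p
      by blast+
    then have "{i, p i} \<in> M" for i by (cases "i \<in> S") auto
    with q show "p = q" using perfect_matching_partner_unique[OF sg pm] by blast
  qed
qed

lemma det_eq_single_permutation:
  fixes A :: "'a::comm_ring_1^'n::finite^'n"
  assumes q: "q permutes UNIV"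
    and only_q: "\<And>p. p permutes UNIV \<Longrightarrow> \<forall>i. A $ i $ p i \<noteq> 0 \<Longrightarrow> p = q"
  shows "det A = of_int (sign q) * (\<Prod>i\<in>UNIV. A $ i $ q i)"
proof -
  let ?term = "\<lambda>p. of_int (sign p) * (\<Prod>i\<in>UNIV. A $ i $ p i)"
  have "?term p = 0" if p: "p \<in> {p. p permutes UNIV} - {q}" for p
  proof -
    obtain i where "A $ i $ p i = 0" using p only_q by blast
    then have "(\<Prod>i\<in>UNIV. A $ i $ p i) = 0" by (intro prod_zero) auto
    then show ?thesis by simp
  qed
  then have "(\<Sum>p\<in>{p. p permutes UNIV} - {q}. ?term p) = 0"
    by (rule sum.neutral[rule_format])
  then show ?thesis
    unfolding det_def using q by (subst sum.remove[of _ q]) auto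
qed

lemma det_weighted_adj_nonzero:
  fixes E :: "'n::finite \<Rightarrow> 'n \<Rightarrow> bool" and w :: "'n set \<Rightarrow> real"
  assumes "simple_graph E" and "bipartite E" and "unique_perfect_matching E"
    and nonzero: "\<forall>u v. E u v \<longrightarrow> w {u, v} \<noteq> 0"
  shows "det (weighted_adj E w) \<noteq> 0"
proof -
  let ?A = "weighted_adj E w"
  obtain q where q: "q permutes UNIV" "\<forall>i. E i (q i)"
    and only_q: "\<And>p. p permutes UNIV \<Longrightarrow> \<forall>i. E i (p i) \<Longrightarrow> p = q"
    using unique_perfect_matching_ex1_edge_permutation[OF assms(1-3)] by (elim ex1E) blast
  have "det ?A = of_int (sign q) * (\<Prod>i\<in>UNIV. ?A $ i $ q i)"
  proof (rule det_eq_single_permutation[OF q(1)])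
    fix p assume "p permutes UNIV" "\<forall>i. ?A $ i $ p i \<noteq> 0"
    then show "p = q" using only_q by (auto simp: weighted_adj_def split: if_splits)
  qed
  moreover have "?A $ i $ q i \<noteq> 0" for i
    using q(2) nonzero by (simp add: weighted_adj_def)
  ultimately show ?thesis by (simp add: sign_def)
qed

section \<open>Entries of the matrix exponential\<close>

definition bipartite_matrix :: "'n set \<Rightarrow> 'a::zero^'n^'n \<Rightarrow> bool" where
  "bipartite_matrix S A \<longleftrightarrow> (\<forall>i j. A $ i $ j \<noteq> 0 \<longrightarrow> (i \<in> S \<longleftrightarrow> j \<notin> S))"

lemma mat_pow_commute:
  fixes A :: "'a::comm_ring_1^'n::finite^'n"
  shows "mat_pow A k ** A = A ** mat_pow A k"
  by (induction k) (simp_all add: matrix_mul_assoc[symmetric])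

lemma transpose_mat_pow:
  fixes A :: "'a::comm_ring_1^'n::finite^'n"
  shows "transpose (mat_pow A k) = mat_pow (transpose A) k"
  by (induction k) (simp_all add: matrix_transpose_mul mat_pow_commute)

lemma mat_pow_bipartite_parity:
  fixes A :: "'a::comm_ring_1^'n::finite^'n"
  assumes "bipartite_matrix S A" and "mat_pow A k $ a $ b \<noteq> 0"
  shows "(a \<in> S \<longleftrightarrow> b \<in> S) \<longleftrightarrow> even k"
  using assms(2)
proof (induction k arbitrary: a)
  case 0
  then show ?case by (auto simp: mat_def split: if_splits)
next
  case (Suc k)
  then obtain v where "A $ a $ v * mat_pow A k $ v $ b \<noteq> 0"
    by (metis (no_types, lifting) sum.neutral mat_pow.simps(2) matrix_matrix_mult_def vec_lambda_beta)
  then have "A $ a $ v \<noteq> 0" "mat_pow A k $ v $ b \<noteq> 0" by auto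
  with Suc.IH[of v] assms(1) show ?case unfolding bipartite_matrix_def by auto
qed

lemma abs_mat_pow_le:
  fixes A :: "real^'n::finite^'n"
  shows "\<bar>mat_pow A k $ a $ b\<bar> \<le> (\<Sum>i\<in>UNIV. \<Sum>j\<in>UNIV. \<bar>A $ i $ j\<bar>) ^ k"
proof (induction k arbitrary: a)
  case 0
  show ?case by (simp add: mat_def)
next
  case (Suc k)
  let ?c = "\<Sum>i\<in>UNIV. \<Sum>j\<in>UNIV. \<bar>A $ i $ j\<bar>"
  have "\<bar>mat_pow A (Suc k) $ a $ b\<bar> \<le> (\<Sum>v\<in>UNIV. \<bar>A $ a $ v\<bar> * \<bar>mat_pow A k $ v $ b\<bar>)"
    unfolding mat_pow.simps matrix_matrix_mult_def vec_lambda_beta abs_mult[symmetric] by (rule sum_abs)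
  also have "\<dots> \<le> (\<Sum>v\<in>UNIV. \<bar>A $ a $ v\<bar>) * ?c ^ k"
    unfolding sum_distrib_right by (intro sum_mono mult_left_mono Suc.IH) auto
  also have "\<dots> \<le> ?c * ?c ^ k"
    by (intro mult_right_mono member_le_sum[where f = "\<lambda>i. \<Sum>j\<in>UNIV. \<bar>A $ i $ j\<bar>"])
      (auto intro!: zero_le_power sum_nonneg)
  finally show ?case by simp
qed

definition exp_coeff :: "real^'n^'n \<Rightarrow> 'n \<Rightarrow> 'n \<Rightarrow> nat \<Rightarrow> complex" where
  "exp_coeff A a b k = of_real (mat_pow A k $ a $ b) / of_nat (fact k)"

definition exp_entry :: "real^'n^'n \<Rightarrow> 'n \<Rightarrow> 'n \<Rightarrow> complex \<Rightarrow> complex" where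
  "exp_entry A a b z = (\<Sum>k. exp_coeff A a b k * z ^ k)"

lemma mat_pow_scaled:
  fixes A :: "real^'n::finite^'n"
  shows "mat_pow (\<chi> i j. c * of_real (A $ i $ j)) k = (\<chi> a b. c ^ k * of_real (mat_pow A k $ a $ b))"
  by (induction k) (simp_all add: vec_eq_iff mat_def matrix_matrix_mult_def sum_distrib_left algebra_simps)

lemma transition_eq_exp_entry:
  fixes A :: "real^'n::finite^'n"
  shows "transition A t $ a $ b = exp_entry A a b (\<i> * of_real t)"
  unfolding transition_def mat_exp_def exp_entry_def exp_coeff_def
  by (simp add: mat_pow_scaled mult.commute)

lemma summable_exp_entry:
  fixes A :: "real^'n::finite^'n"
  shows "summable (\<lambda>k. exp_coeff A a b k * z ^ k)"
proof (rule summable_norm_cancel)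
  let ?c = "\<Sum>i\<in>UNIV. \<Sum>j\<in>UNIV. \<bar>A $ i $ j\<bar>"
  have "norm (norm (exp_coeff A a b k * z ^ k)) \<le> inverse (fact k) * (?c * norm z) ^ k" for k
  proof -
    have "norm (exp_coeff A a b k * z ^ k) = \<bar>mat_pow A k $ a $ b\<bar> / fact k * norm z ^ k"
      by (simp add: exp_coeff_def norm_mult norm_divide norm_power)
    also have "\<dots> \<le> ?c ^ k / fact k * norm z ^ k"
      by (intro mult_right_mono divide_right_mono abs_mat_pow_le) auto
    finally show ?thesis by (simp add: power_mult_distrib divide_inverse mult_ac)
  qed
  then show "summable (\<lambda>k. norm (exp_coeff A a b k * z ^ k))"
    by (rule summable_comparison_test'[OF summable_exp])
qed

lemma diffs_exp_coeff:
  fixes A :: "real^'n::finite^'n"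
  shows "diffs (exp_coeff A a b) n = (\<Sum>v\<in>UNIV. of_real (A $ a $ v) * exp_coeff A v b n)"
    and "diffs (exp_coeff A a b) n = (\<Sum>v\<in>UNIV. exp_coeff A a v n * of_real (A $ v $ b))"
proof -
  have diffs: "diffs (exp_coeff A a b) n = of_real (mat_pow A (Suc n) $ a $ b) / of_nat (fact n)"
    unfolding diffs_def exp_coeff_def fact_Suc of_nat_mult
    by (simp del: mat_pow.simps of_nat_Suc fact_Suc)
  then show "diffs (exp_coeff A a b) n = (\<Sum>v\<in>UNIV. of_real (A $ a $ v) * exp_coeff A v b n)"
    by (simp add: exp_coeff_def matrix_matrix_mult_def sum_divide_distrib)
  have "mat_pow A (Suc n) = mat_pow A n ** A" by (simp add: mat_pow_commute)
  with diffs show "diffs (exp_coeff A a b) n = (\<Sum>v\<in>UNIV. exp_coeff A a v n * of_real (A $ v $ b))"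
    by (simp add: exp_coeff_def matrix_matrix_mult_def sum_divide_distrib del: mat_pow.simps)
qed

lemma exp_entry_diffs:
  fixes A :: "real^'n::finite^'n"
  shows "(\<Sum>n. diffs (exp_coeff A a b) n * z ^ n) = (\<Sum>v\<in>UNIV. of_real (A $ a $ v) * exp_entry A v b z)"
    and "(\<Sum>n. diffs (exp_coeff A a b) n * z ^ n) = (\<Sum>v\<in>UNIV. exp_entry A a v z * of_real (A $ v $ b))"
proof -
  have "(\<Sum>n. diffs (exp_coeff A a b) n * z ^ n)
      = (\<Sum>n. \<Sum>v\<in>UNIV. of_real (A $ a $ v) * (exp_coeff A v b n * z ^ n))"
    by (simp add: diffs_exp_coeff(1) sum_distrib_right mult.assoc)
  also have "\<dots> = (\<Sum>v\<in>UNIV. of_real (A $ a $ v) * exp_entry A v b z)"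
    unfolding exp_entry_def
    by (subst suminf_sum) (auto intro!: summable_mult summable_exp_entry sum.cong suminf_mult)
  finally show "(\<Sum>n. diffs (exp_coeff A a b) n * z ^ n) = (\<Sum>v\<in>UNIV. of_real (A $ a $ v) * exp_entry A v b z)" .
  have "(\<Sum>n. diffs (exp_coeff A a b) n * z ^ n)
      = (\<Sum>n. \<Sum>v\<in>UNIV. exp_coeff A a v n * z ^ n * of_real (A $ v $ b))"
    by (simp add: diffs_exp_coeff(2) sum_distrib_left mult_ac)
  also have "\<dots> = (\<Sum>v\<in>UNIV. exp_entry A a v z * of_real (A $ v $ b))"
    unfolding exp_entry_def
    by (subst suminf_sum) (auto intro!: summable_mult2 summable_exp_entry sum.cong suminf_mult2[symmetric])
  finally show "(\<Sum>n. diffs (exp_coeff A a b) n * z ^ n) = (\<Sum>v\<in>UNIV. exp_entry A a v z * of_real (A $ v $ b))" .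
qed

lemma exp_entry_commute:
  fixes A :: "real^'n::finite^'n"
  shows "(\<Sum>v\<in>UNIV. of_real (A $ a $ v) * exp_entry A v b z) = (\<Sum>v\<in>UNIV. exp_entry A a v z * of_real (A $ v $ b))"
  using exp_entry_diffs[of A a b z] by simp

lemma sum_exp_entry_commute_mult:
  fixes A :: "real^'n::finite^'n" and F :: "'n \<Rightarrow> complex"
  shows "(\<Sum>v\<in>UNIV. (\<Sum>x\<in>UNIV. of_real (A $ a $ x) * exp_entry A x v z) * F v)
    = (\<Sum>v\<in>UNIV. exp_entry A a v z * (\<Sum>x\<in>UNIV. of_real (A $ v $ x) * F x))"
proof -
  have "(\<Sum>v\<in>UNIV. (\<Sum>x\<in>UNIV. of_real (A $ a $ x) * exp_entry A x v z) * F v)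
      = (\<Sum>v\<in>UNIV. \<Sum>x\<in>UNIV. exp_entry A a x z * of_real (A $ x $ v) * F v)"
    by (simp add: exp_entry_commute sum_distrib_right)
  also have "\<dots> = (\<Sum>x\<in>UNIV. \<Sum>v\<in>UNIV. exp_entry A a x z * of_real (A $ x $ v) * F v)"
    by (rule sum.swap)
  also have "\<dots> = (\<Sum>v\<in>UNIV. exp_entry A a v z * (\<Sum>x\<in>UNIV. of_real (A $ v $ x) * F x))"
    by (simp add: sum_distrib_left mult.assoc)
  finally show ?thesis .
qed

lemma has_field_derivative_exp_entry:
  fixes A :: "real^'n::finite^'n"
  shows "(exp_entry A a b has_field_derivative (\<Sum>v\<in>UNIV. of_real (A $ a $ v) * exp_entry A v b z)) (at z)"
proof -
  have "((\<lambda>z. \<Sum>k. exp_coeff A a b k * z ^ k) has_field_derivative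
      (\<Sum>n. diffs (exp_coeff A a b) n * z ^ n)) (at z)"
    by (rule termdiffs_strong_converges_everywhere) (rule summable_exp_entry)
  then show ?thesis
    unfolding exp_entry_diffs(1) by (simp add: exp_entry_def[abs_def])
qed

lemma exp_entry_0:
  fixes A :: "real^'n::finite^'n"
  shows "exp_entry A a b 0 = (if a = b then 1 else 0)"
  unfolding exp_entry_def using powser_zero[of "exp_coeff A a b"] by (simp add: exp_coeff_def mat_def)

lemma sum_exp_entry_add_neg:
  fixes A :: "real^'n::finite^'n"
  shows "(\<Sum>v\<in>UNIV. exp_entry A a v (z + w) * exp_entry A v b (- z)) = exp_entry A a b w"
proof -
  define V where "V z = (\<Sum>v\<in>UNIV. exp_entry A a v (z + w) * exp_entry A v b (- z))" for z
  have "(V has_field_derivative 0) (at z)" for z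
  proof -
    let ?D = "\<lambda>a b z. \<Sum>x\<in>UNIV. of_real (A $ a $ x) * exp_entry A x b z"
    have "((\<lambda>z. z + w) has_field_derivative 1) (at z)" "((\<lambda>z. - z) has_field_derivative - 1) (at z)"
      by (auto intro!: derivative_eq_intros)
    from DERIV_chain2[OF has_field_derivative_exp_entry this(1)]
      DERIV_chain2[OF has_field_derivative_exp_entry this(2)]
    have shift: "((\<lambda>z. exp_entry A a v (z + w)) has_field_derivative ?D a v (z + w)) (at z)"
      and reflect: "((\<lambda>z. exp_entry A v b (- z)) has_field_derivative - ?D v b (- z)) (at z)" for v
      by simp_all
    have "(V has_field_derivative (\<Sum>v\<in>UNIV. ?D a v (z + w) * exp_entry A v b (- z)
        - exp_entry A a v (z + w) * ?D v b (- z))) (at z)"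
      unfolding V_def[abs_def] by (intro DERIV_sum) (use DERIV_mult'[OF shift reflect] in simp)
    moreover have "(\<Sum>v\<in>UNIV. ?D a v (z + w) * exp_entry A v b (- z))
        = (\<Sum>v\<in>UNIV. exp_entry A a v (z + w) * ?D v b (- z))"
      by (rule sum_exp_entry_commute_mult)
    ultimately show ?thesis by (simp add: sum_subtractf)
  qed
  then have "V z = V 0"
    using has_field_derivative_zero_constant[of UNIV V] by (metis UNIV_I convex_UNIV open_UNIV at_within_open)
  then show ?thesis
    unfolding V_def by (simp add: exp_entry_0 if_distrib cong: if_cong)
qed

lemma cnj_exp_entry:
  fixes A :: "real^'n::finite^'n"
  shows "cnj (exp_entry A a b z) = exp_entry A a b (cnj z)"
proof -
  have "(\<lambda>k. exp_coeff A a b k * z ^ k) sums exp_entry A a b z"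
    unfolding exp_entry_def by (rule summable_sums[OF summable_exp_entry])
  then have "(\<lambda>k. exp_coeff A a b k * cnj z ^ k) sums cnj (exp_entry A a b z)"
    using sums_cnj by (fastforce simp: exp_coeff_def)
  then show ?thesis unfolding exp_entry_def by (simp add: sums_iff)
qed

lemma exp_entry_symmetric:
  fixes A :: "real^'n::finite^'n"
  assumes "transpose A = A"
  shows "exp_entry A a b z = exp_entry A b a z"
proof -
  have "mat_pow A k $ a $ b = mat_pow A k $ b $ a" for k
  proof -
    have "mat_pow A k $ a $ b = transpose (mat_pow A k) $ b $ a" by (simp add: transpose_def)
    then show ?thesis by (simp add: transpose_mat_pow assms)
  qed
  then show ?thesis unfolding exp_entry_def exp_coeff_def by simp
qed

text \<open>\<open>exp (\<i> t A)\<close> is unitary, so each of its rows has norm \<open>1\<close>.\<close>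
lemma norm_exp_entry_imaginary_le_1:
  fixes A :: "real^'n::finite^'n"
  assumes "transpose A = A"
  shows "norm (exp_entry A a b (\<i> * of_real t)) \<le> 1"
proof -
  let ?z = "\<i> * of_real t"
  have "exp_entry A v a (- ?z) = cnj (exp_entry A a v ?z)" for v
    using exp_entry_symmetric[OF assms, of v a] cnj_exp_entry[of A a v ?z] by simp
  then have "(\<Sum>v\<in>UNIV. exp_entry A a v ?z * cnj (exp_entry A a v ?z)) = 1"
    using sum_exp_entry_add_neg[of A a ?z 0 a] by (simp add: exp_entry_0)
  then have "complex_of_real (\<Sum>v\<in>UNIV. (norm (exp_entry A a v ?z))\<^sup>2) = 1"
    by (simp only: of_real_sum complex_norm_square)
  then have "(\<Sum>v\<in>UNIV. (norm (exp_entry A a v ?z))\<^sup>2) = 1"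
    by (simp only: of_real_eq_1_iff)
  moreover have "(norm (exp_entry A a b ?z))\<^sup>2 \<le> (\<Sum>v\<in>UNIV. (norm (exp_entry A a v ?z))\<^sup>2)"
    by (rule member_le_sum) auto
  ultimately show ?thesis by (simp add: power_le_one_iff abs_le_square_iff)
qed

text \<open>Odd powers of a bipartite matrix vanish on the diagonal.\<close>
lemma exp_entry_diag_even:
  fixes A :: "real^'n::finite^'n"
  assumes "bipartite_matrix S A"
  shows "exp_entry A u u (- z) = exp_entry A u u z"
proof -
  have "(\<lambda>k. exp_coeff A u u k * (- z) ^ k) = (\<lambda>k. exp_coeff A u u k * z ^ k)"
  proof
    fix k
    show "exp_coeff A u u k * (- z) ^ k = exp_coeff A u u k * z ^ k"
    proof (cases "even k")
      case False
      then have "mat_pow A k $ u $ u = 0" using mat_pow_bipartite_parity[OF assms] by blast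
      then show ?thesis by (simp add: exp_coeff_def)
    qed simp
  qed
  then show ?thesis unfolding exp_entry_def by (rule arg_cong)
qed

lemma Im_exp_entry_diag_imaginary:
  fixes A :: "real^'n::finite^'n"
  assumes "bipartite_matrix S A"
  shows "Im (exp_entry A u u (\<i> * of_real t)) = 0"
proof -
  have "cnj (exp_entry A u u (\<i> * of_real t)) = exp_entry A u u (\<i> * of_real t)"
    using cnj_exp_entry[of A u u "\<i> * of_real t"] exp_entry_diag_even[OF assms] by simp
  then show ?thesis by (metis Reals_cnj_iff complex_is_Real_iff)
qed

lemma has_field_derivative_exp_entry_right_inverse:
  fixes A :: "real^'n::finite^'n"
  assumes "A ** B = mat 1"
  shows "((\<lambda>z. \<Sum>v\<in>UNIV. exp_entry A a v z * of_real (B $ v $ b)) has_field_derivative exp_entry A a b z) (at z)"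
proof -
  have "((\<lambda>z. \<Sum>v\<in>UNIV. exp_entry A a v z * of_real (B $ v $ b)) has_field_derivative
      (\<Sum>v\<in>UNIV. (\<Sum>y\<in>UNIV. of_real (A $ a $ y) * exp_entry A y v z) * of_real (B $ v $ b))) (at z)"
    by (intro DERIV_sum DERIV_cmult_right has_field_derivative_exp_entry)
  moreover have "(\<Sum>v\<in>UNIV. (\<Sum>y\<in>UNIV. of_real (A $ a $ y) * exp_entry A y v z) * of_real (B $ v $ b))
      = exp_entry A a b z"
  proof -
    have AB: "(\<Sum>v\<in>UNIV. of_real (A $ y $ v) * of_real (B $ v $ b)) = (if y = b then 1 else (0::complex))" for y
      using arg_cong[OF assms, of "\<lambda>M. complex_of_real (M $ y $ b)"]
      by (simp add: matrix_matrix_mult_def mat_def of_real_sum)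
    have "(\<Sum>v\<in>UNIV. (\<Sum>y\<in>UNIV. of_real (A $ a $ y) * exp_entry A y v z) * of_real (B $ v $ b))
        = (\<Sum>y\<in>UNIV. exp_entry A a y z * (\<Sum>v\<in>UNIV. of_real (A $ y $ v) * of_real (B $ v $ b)))"
      by (rule sum_exp_entry_commute_mult)
    also have "\<dots> = exp_entry A a b z"
      by (simp add: AB if_distrib cong: if_cong)
    finally show ?thesis .
  qed
  ultimately show ?thesis by simp
qed

section \<open>Sedentary vertices\<close>

lemma continuous_nonvanishing_pos:
  fixes g :: "real \<Rightarrow> real"
  assumes "continuous_on {a..b} g" and "a \<le> b" and "0 < g a" and "\<And>t. a \<le> t \<Longrightarrow> t \<le> b \<Longrightarrow> g t \<noteq> 0"
  shows "0 < g b"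
proof (rule ccontr)
  assume "\<not> 0 < g b"
  then obtain t where "a \<le> t" "t \<le> b" "g t = 0"
    using IVT2'[of g b 0 a] assms(1-3) by auto
  with assms(4) show False by blast
qed

lemma sedentary_imp_lower_bound:
  assumes "sedentary A u"
  obtains C where "0 < C" and "C \<le> 1" and "\<And>t. 0 < t \<Longrightarrow> C \<le> cmod (transition A t $ u $ u)"
proof -
  obtain C where C: "0 < C" "C \<le> 1" "C \<le> (INF t\<in>{0<..}. cmod (transition A t $ u $ u))"
    using assms unfolding sedentary_def by blast
  have "(INF t\<in>{0<..}. cmod (transition A t $ u $ u)) \<le> cmod (transition A t $ u $ u)" if "0 < t" for t
    by (rule cINF_lower) (use that in \<open>auto intro: bdd_belowI[of _ 0]\<close>)
  then have "C \<le> cmod (transition A t $ u $ u)" if "0 < t" for t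
    using C(3) that by (meson order_trans)
  with C(1,2) show ?thesis by (rule that)
qed

lemma sedentary_imp_Re_exp_entry_ge:
  fixes A :: "real^'n::finite^'n"
  assumes bip: "bipartite_matrix S A" and "sedentary A u"
  obtains C where "0 < C" and "\<And>t. 0 \<le> t \<Longrightarrow> C \<le> Re (exp_entry A u u (\<i> * of_real t))"
proof -
  obtain C where C: "0 < C" "C \<le> 1" and lower: "\<And>t. 0 < t \<Longrightarrow> C \<le> cmod (transition A t $ u $ u)"
    using assms(2) by (elim sedentary_imp_lower_bound) blast
  define g where "g t = Re (exp_entry A u u (\<i> * of_real t))" for t
  have entry: "exp_entry A u u (\<i> * of_real t) = of_real (g t)" for t
    using Im_exp_entry_diag_imaginary[OF bip] unfolding g_def by (simp add: complex_eq_iff)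
  have g0: "g 0 = 1" unfolding g_def by (simp add: exp_entry_0)
  have g_cont: "continuous_on {0..t} g" for t
    unfolding g_def
    by (intro continuous_at_imp_continuous_on ballI isCont_Re continuous_intros
        isCont_o2[OF _ DERIV_isCont[OF has_field_derivative_exp_entry]])
  have "g s \<noteq> 0" if "0 \<le> s" for s
    using lower[of s] C(1) g0 that by (cases "s = 0") (auto simp: transition_eq_exp_entry entry)
  then have g_pos: "0 < g t" if "0 \<le> t" for t
    by (intro continuous_nonvanishing_pos[OF g_cont that]) (auto simp: g0)
  have "C \<le> g t" if "0 \<le> t" for t
    using g_pos[OF that] lower[of t] that C(2) g0
    by (cases "t = 0") (auto simp: transition_eq_exp_entry entry)
  with C(1) show ?thesis using that unfolding g_def by blast
qed

lemma bounded_antiderivative_Re_exp_entry_diag: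
  fixes A :: "real^'n::finite^'n"
  assumes sym: "transpose A = A" and "invertible A"
  obtains G X where "\<And>t. (G has_real_derivative Re (exp_entry A u u (\<i> * of_real t))) (at t)"
    and "\<And>t. \<bar>G t\<bar> \<le> X"
proof -
  obtain B where AB: "A ** B = mat 1"
    using \<open>invertible A\<close> invertible_right_inverse by blast
  define H where "H z = (\<Sum>v\<in>UNIV. exp_entry A u v z * of_real (B $ v $ u))" for z
  define G where "G t = Im (H (\<i> * of_real t))" for t
  have "(G has_real_derivative Re (exp_entry A u u (\<i> * of_real t))) (at t)" for t
  proof -
    have "((\<lambda>t. \<i> * complex_of_real t) has_vector_derivative \<i>) (at t)"
      by (auto intro!: derivative_eq_intros)
    from field_vector_diff_chain_at[OF this has_field_derivative_exp_entry_right_inverse[OF AB, of u u]]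
    have "((\<lambda>t. H (\<i> * of_real t)) has_vector_derivative \<i> * exp_entry A u u (\<i> * of_real t)) (at t)"
      by (simp add: H_def o_def)
    from bounded_linear.has_vector_derivative[OF bounded_linear_Im this]
    show ?thesis
      by (simp add: G_def[abs_def] has_real_derivative_iff_has_vector_derivative)
  qed
  moreover have "\<bar>G t\<bar> \<le> (\<Sum>v\<in>UNIV. \<bar>B $ v $ u\<bar>)" for t
  proof -
    have "\<bar>G t\<bar> \<le> norm (H (\<i> * of_real t))"
      unfolding G_def by (rule abs_Im_le_cmod)
    also have "\<dots> \<le> (\<Sum>v\<in>UNIV. norm (exp_entry A u v (\<i> * of_real t)) * \<bar>B $ v $ u\<bar>)"
      unfolding H_def using norm_sum[of "\<lambda>v. exp_entry A u v (\<i> * of_real t) * of_real (B $ v $ u)" UNIV]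
      by (simp add: norm_mult)
    also have "\<dots> \<le> (\<Sum>v\<in>UNIV. \<bar>B $ v $ u\<bar>)"
      by (intro sum_mono mult_left_le_one_le norm_exp_entry_imaginary_le_1[OF sym]) auto
    finally show ?thesis .
  qed
  ultimately show ?thesis using that by blast
qed

lemma unbounded_if_derivative_ge:
  fixes G g :: "real \<Rightarrow> real"
  assumes deriv: "\<And>t. (G has_real_derivative g t) (at t)"
    and "0 < C" and ge: "\<And>t. 0 \<le> t \<Longrightarrow> C \<le> g t"
  shows "\<exists>t. X < \<bar>G t\<bar>"
proof (rule ccontr)
  assume "\<nexists>t. X < \<bar>G t\<bar>"
  then have bound: "\<bar>G t\<bar> \<le> X" for t by (simp add: not_less)
  define T where "T = (2 * X + 1) / C"
  have "0 \<le> X" using bound[of 0] by simp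
  with \<open>0 < C\<close> have "0 < T" unfolding T_def by simp
  then obtain s where "0 < s" "G T - G 0 = T * g s"
    using MVT2[of 0 T G g] deriv by auto
  then have "C * T \<le> G T - G 0"
    using ge[of s] \<open>0 < T\<close> by (simp add: mult.commute mult_left_mono)
  moreover have "C * T = 2 * X + 1" unfolding T_def using \<open>0 < C\<close> by simp
  ultimately show False
    using bound[of T] bound[of 0] by linarith
qed

lemma not_sedentary_if_bipartite_invertible:
  fixes A :: "real^'n::finite^'n"
  assumes "transpose A = A" and "bipartite_matrix S A" and "invertible A"
  shows "\<not> sedentary A u"
proof
  assume "sedentary A u"
  then obtain C where "0 < C" "\<And>t. 0 \<le> t \<Longrightarrow> C \<le> Re (exp_entry A u u (\<i> * of_real t))"
    using sedentary_imp_Re_exp_entry_ge[OF assms(2)] by blast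
  moreover obtain G X where "\<And>t. (G has_real_derivative Re (exp_entry A u u (\<i> * of_real t))) (at t)"
    and "\<And>t. \<bar>G t\<bar> \<le> X"
    using bounded_antiderivative_Re_exp_entry_diag[OF assms(1,3)] by blast
  ultimately show False
    using unbounded_if_derivative_ge[of G _ C X] by (meson not_le)
qed

theorem theorem20:
  fixes E :: "'n::finite \<Rightarrow> 'n \<Rightarrow> bool" and w :: "'n set \<Rightarrow> real"
  assumes "simple_graph E" and "graph_connected E" and "bipartite E"
    and "unique_perfect_matching E"
    and "\<forall>u v. E u v \<longrightarrow> w {u, v} \<noteq> 0"
  shows "\<forall>u. \<not> sedentary (weighted_adj E w) u"
proof
  fix u
  let ?A = "weighted_adj E w"
  have "transpose ?A = ?A"
    using assms(1) unfolding simple_graph_def weighted_adj_def transpose_def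
    by (auto simp: vec_eq_iff insert_commute)
  moreover obtain S where "\<forall>u v. E u v \<longrightarrow> (u \<in> S \<longleftrightarrow> v \<notin> S)"
    using assms(3) unfolding bipartite_def by blast
  then have "bipartite_matrix S ?A"
    unfolding bipartite_matrix_def weighted_adj_def by auto
  moreover have "invertible ?A"
    using det_weighted_adj_nonzero[OF assms(1,3-5)] by (simp add: invertible_det_nz)
  ultimately show "\<not> sedentary ?A u"
    by (rule not_sedentary_if_bipartite_invertible)
qed

end
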